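(* If $G$ is a $3$-$\gamma_{\rm tg}$-critical graph, then $G$ has no dominating vertex, and $\gamma_{\rm tg}(G|w)=2$ for every vertex $w$ of $G$.
   Context: A dominating vertex is a vertex adjacent to all other vertices. Total domination game on a graph without isolated vertices: Dominator and Staller alternately choose vertices, each chosen vertex must be adjacent to some vertex not yet totally dominated; the game ends when no legal move exists; Dominator minimizes, Staller maximizes the number of moves; $\gamma_{\rm tg}(G)$ is the number of moves in the Dominator-start game under optimal play. $G|w$ is $G$ with $w$ declared already totally dominated, with $\gamma_{\rm tg}(G|w)$ defined analogously. $G$ is $3$-$\gamma_{\rm tg}$-critical if $\gamma_{\rm tg}(G)=3$ and $\gamma_{\rm tg}(G|v)<3$ for every vertex $v$. *)

theory Defs
  imports Main
begin

definition graph_no_isolated :: "'a set \<Rightarrow> ('a \<Rightarrow> 'a \<Rightarrow> bool) \<Rightarrow> bool" where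
  "graph_no_isolated V E \<longleftrightarrow> finite V
     \<and> (\<forall>u v. E u v \<longrightarrow> u \<in> V \<and> v \<in> V)
     \<and> (\<forall>u v. E u v \<longrightarrow> E v u)
     \<and> (\<forall>v. \<not> E v v)
     \<and> (\<forall>v\<in>V. \<exists>u\<in>V. E v u)"

definition nbhd :: "'a set \<Rightarrow> ('a \<Rightarrow> 'a \<Rightarrow> bool) \<Rightarrow> 'a \<Rightarrow> 'a set" where
  "nbhd V E v = {u \<in> V. E v u}"

definition legal_moves :: "'a set \<Rightarrow> ('a \<Rightarrow> 'a \<Rightarrow> bool) \<Rightarrow> 'a set \<Rightarrow> 'a set" where
  "legal_moves V E D = {v \<in> V. \<exists>u \<in> V. E v u \<and> u \<notin> D}"

text \<open>Value of the total domination game under optimal play: D is the set of vertices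
  already totally dominated, d = True means Dominator (minimizer) is to move.\<close>
function tg_value :: "'a set \<Rightarrow> ('a \<Rightarrow> 'a \<Rightarrow> bool) \<Rightarrow> bool \<Rightarrow> 'a set \<Rightarrow> nat" where
  "tg_value V E d D =
     (if infinite V \<or> legal_moves V E D = {} then 0
      else if d then 1 + Min ((\<lambda>v. tg_value V E False (D \<union> nbhd V E v)) ` legal_moves V E D)
      else 1 + Max ((\<lambda>v. tg_value V E True (D \<union> nbhd V E v)) ` legal_moves V E D))"
  by auto
termination
proof (relation "measure (\<lambda>(V, E, d, D). card (V - D))", goal_cases)
  case 1 then show ?case by auto
next
  case (2 V E d D v)
  then obtain u where "u \<in> V" "E v u" "u \<notin> D" by (auto simp: legal_moves_def)
  hence "V - (D \<union> nbhd V E v) \<subset> V - D" by (auto simp: nbhd_def)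
  with 2 show ?case by (auto intro: psubset_card_mono)
next
  case (3 V E d D v)
  then obtain u where "u \<in> V" "E v u" "u \<notin> D" by (auto simp: legal_moves_def)
  hence "V - (D \<union> nbhd V E v) \<subset> V - D" by (auto simp: nbhd_def)
  with 3 show ?case by (auto intro: psubset_card_mono)
qed

definition gamma_tg :: "'a set \<Rightarrow> ('a \<Rightarrow> 'a \<Rightarrow> bool) \<Rightarrow> nat" where
  "gamma_tg V E = tg_value V E True {}"

text \<open>gamma_tg(G|w): Dominator-start game with w declared already totally dominated.\<close>
definition gamma_tg_pre :: "'a set \<Rightarrow> ('a \<Rightarrow> 'a \<Rightarrow> bool) \<Rightarrow> 'a \<Rightarrow> nat" where
  "gamma_tg_pre V E w = tg_value V E True {w}"

definition dominating_vertex :: "'a set \<Rightarrow> ('a \<Rightarrow> 'a \<Rightarrow> bool) \<Rightarrow> 'a \<Rightarrow> bool" where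
  "dominating_vertex V E v \<longleftrightarrow> v \<in> V \<and> (\<forall>u\<in>V. u \<noteq> v \<longrightarrow> E v u)"

definition three_tg_critical :: "'a set \<Rightarrow> ('a \<Rightarrow> 'a \<Rightarrow> bool) \<Rightarrow> bool" where
  "three_tg_critical V E \<longleftrightarrow> gamma_tg V E = 3 \<and> (\<forall>v\<in>V. gamma_tg_pre V E v < 3)"

end

theory Submission
  imports Defs
begin

text \<open>A game value is 0 exactly when every vertex is already totally dominated, since in a
  graph without isolated vertices any neighbour of an undominated vertex is a legal move.
  A dominating vertex v lets Dominator finish in two moves: after v everything but v is
  dominated, and any legal reply is a neighbour of v. If Dominator finishes the game on
  G|w in a single move v, then v is the only vertex outside its own neighbourhood, so
  v = w and w is dominating. Finally w itself is legal in G|w, so the value there is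
  never 0. For a 3-critical graph this leaves exactly the value 2.\<close>

declare tg_value.simps[simp del]

lemma finite_legal_moves: "finite V \<Longrightarrow> finite (legal_moves V E D)"
  by (simp add: legal_moves_def)

lemma legal_moves_eq_empty_iff:
  assumes "graph_no_isolated V E"
  shows "legal_moves V E D = {} \<longleftrightarrow> V \<subseteq> D"
proof
  assume no_moves: "legal_moves V E D = {}"
  show "V \<subseteq> D"
  proof
    fix u assume "u \<in> V"
    with assms obtain x where "x \<in> V" "E x u"
      unfolding graph_no_isolated_def by metis
    with no_moves \<open>u \<in> V\<close> show "u \<in> D" unfolding legal_moves_def by blast
  qed
qed (auto simp: legal_moves_def)

lemma tg_value_eq_0_iff:
  assumes "graph_no_isolated V E"
  shows "tg_value V E d D = 0 \<longleftrightarrow> V \<subseteq> D"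
proof -
  have "finite V" using assms by (simp add: graph_no_isolated_def)
  then have "tg_value V E d D = 0 \<longleftrightarrow> legal_moves V E D = {}"
    by (subst tg_value.simps) auto
  with legal_moves_eq_empty_iff[OF assms] show ?thesis by simp
qed

lemma tg_value_True_le:
  assumes "finite V" "v \<in> legal_moves V E D"
  shows "tg_value V E True D \<le> 1 + tg_value V E False (D \<union> nbhd V E v)"
proof -
  have "Min ((\<lambda>v. tg_value V E False (D \<union> nbhd V E v)) ` legal_moves V E D)
        \<le> tg_value V E False (D \<union> nbhd V E v)"
    using assms by (intro Min_le) (auto simp: finite_legal_moves)
  with assms show ?thesis by (subst tg_value.simps) auto
qed

lemma tg_value_False_le:
  assumes "finite V" "\<And>v. v \<in> legal_moves V E D \<Longrightarrow> tg_value V E True (D \<union> nbhd V E v) \<le> k"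
  shows "tg_value V E False D \<le> 1 + k"
proof (cases "legal_moves V E D = {}")
  case True
  with assms show ?thesis by (subst tg_value.simps) auto
next
  case False
  have "Max ((\<lambda>v. tg_value V E True (D \<union> nbhd V E v)) ` legal_moves V E D) \<le> k"
    using assms False by (subst Max_le_iff) (auto simp: finite_legal_moves)
  with assms False show ?thesis by (subst tg_value.simps) auto
qed

lemma tg_value_True_eq_1E:
  assumes "finite V" "tg_value V E True D = 1"
  obtains v where "v \<in> legal_moves V E D" "tg_value V E False (D \<union> nbhd V E v) = 0"
proof -
  let ?values = "(\<lambda>v. tg_value V E False (D \<union> nbhd V E v)) ` legal_moves V E D"
  have moves: "legal_moves V E D \<noteq> {}"
    using assms by (subst (asm) tg_value.simps) (auto split: if_splits)
  with assms have "Min ?values = 0"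
    by (subst (asm) tg_value.simps) auto
  moreover have "Min ?values \<in> ?values"
    using moves assms by (intro Min_in) (auto simp: finite_legal_moves)
  ultimately show ?thesis using that by force
qed

lemma gamma_tg_le_2_if_dominating_vertex:
  assumes G: "graph_no_isolated V E" and "dominating_vertex V E v"
  shows "gamma_tg V E \<le> 2"
proof -
  have fin: "finite V" and sym: "\<And>x y. E x y \<Longrightarrow> E y x" and "v \<in> V"
    and adj: "\<And>u. u \<in> V \<Longrightarrow> u \<noteq> v \<Longrightarrow> E v u"
    using assms by (auto simp: graph_no_isolated_def dominating_vertex_def)
  obtain u where "u \<in> V" "E v u"
    using G \<open>v \<in> V\<close> unfolding graph_no_isolated_def by blast
  with \<open>v \<in> V\<close> have "v \<in> legal_moves V E {}"
    by (auto simp: legal_moves_def)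
  then have "gamma_tg V E \<le> 1 + tg_value V E False (nbhd V E v)"
    using tg_value_True_le[OF fin] by (fastforce simp: gamma_tg_def)
  also have "tg_value V E False (nbhd V E v) \<le> 1 + 0"
  proof (rule tg_value_False_le[OF fin])
    fix x assume "x \<in> legal_moves V E (nbhd V E v)"
    then have "E x v" using adj by (auto simp: legal_moves_def nbhd_def)
    then have "V \<subseteq> nbhd V E v \<union> nbhd V E x"
      using adj sym by (auto simp: nbhd_def)
    then show "tg_value V E True (nbhd V E v \<union> nbhd V E x) \<le> 0"
      using tg_value_eq_0_iff[OF G] by simp
  qed
  finally show ?thesis by simp
qed

lemma gamma_tg_pre_pos:
  assumes G: "graph_no_isolated V E" and "w \<in> V"
  shows "gamma_tg_pre V E w \<noteq> 0"
proof -
  obtain u where "u \<in> V" "E w u"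
    using assms unfolding graph_no_isolated_def by blast
  moreover have "u \<noteq> w" using \<open>E w u\<close> G by (auto simp: graph_no_isolated_def)
  ultimately have "\<not> V \<subseteq> {w}" by blast
  then show ?thesis using tg_value_eq_0_iff[OF G] by (simp add: gamma_tg_pre_def)
qed

lemma dominating_vertex_if_gamma_tg_pre_eq_1:
  assumes G: "graph_no_isolated V E" and "w \<in> V" and "gamma_tg_pre V E w = 1"
  shows "dominating_vertex V E w"
proof -
  have fin: "finite V" and irrefl: "\<And>x. \<not> E x x"
    using G by (auto simp: graph_no_isolated_def)
  obtain v where "v \<in> legal_moves V E {w}" "tg_value V E False ({w} \<union> nbhd V E v) = 0"
    using tg_value_True_eq_1E[OF fin] assms(3) unfolding gamma_tg_pre_def by blast
  then have "v \<in> V" and covered: "V \<subseteq> {w} \<union> nbhd V E v"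
    using tg_value_eq_0_iff[OF G] by (auto simp: legal_moves_def)
  then have "v = w" using irrefl by (auto simp: nbhd_def)
  with covered \<open>w \<in> V\<close> show ?thesis by (auto simp: dominating_vertex_def nbhd_def)
qed

theorem lemma4p5:
  fixes V :: "'a set" and E :: "'a \<Rightarrow> 'a \<Rightarrow> bool"
  assumes "graph_no_isolated V E"
    and "three_tg_critical V E"
  shows "(\<nexists>v. dominating_vertex V E v) \<and> (\<forall>w\<in>V. gamma_tg_pre V E w = 2)"
proof -
  have no_dominating: "\<nexists>v. dominating_vertex V E v"
    using gamma_tg_le_2_if_dominating_vertex[OF assms(1)] assms(2)
    by (fastforce simp: three_tg_critical_def)
  moreover have "gamma_tg_pre V E w = 2" if "w \<in> V" for w
  proof -
    have "gamma_tg_pre V E w < 3"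
      using assms(2) that by (simp add: three_tg_critical_def)
    moreover have "gamma_tg_pre V E w \<noteq> 0"
      using gamma_tg_pre_pos[OF assms(1) that] .
    moreover have "gamma_tg_pre V E w \<noteq> 1"
      using dominating_vertex_if_gamma_tg_pre_eq_1[OF assms(1) that] no_dominating by blast
    ultimately show ?thesis by linarith
  qed
  ultimately show ?thesis by blast
qed

end
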